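(* Let $x>0$ and $t>0$ be real numbers. For $n\in\mathbb{N}$ and $\omega=\omega_1\cdots\omega_n\in\{-1,1\}^n$ define, for $0\le k\le n$, \[ S_k(\omega):=x+\frac{\sqrt{t}}{\sqrt{n}}\sum_{i=1}^k\omega_i \] (so $S_0(\omega)=x$; note the normalisation is $\sqrt{n}$, not $\sqrt{k}$). Let $A_n:=\{\omega\in\{-1,1\}^n:\ S_k(\omega)>0 \text{ for all } 1\le k\le n\}$, and equip $A_n$ with the uniform probability measure $\mathbb{P}_n$; this is a fair coin tossed exactly $n$ times, conditioned on the walk $S_k$ staying strictly positive. Then for all extended real numbers $a<b$ with $(a,b)\subset[0,\infty]$, \[ \lim_{n\to\infty}\mathbb{P}_n\big(a\le S_n\le b\big)=\frac{\int_a^b H(t,x,y)\,dy}{\int_0^\infty H(t,x,y)\,dy}, \] where $H(t,x,y):=G(t,x,y)-G(t,x,-y)$ and $G(t,x,y):=\frac{1}{\sqrt{2\pi t}}\exp\!\big(-\frac{(y-x)^2}{2t}\big)$.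
   Context: Here $1$ stands for heads and $-1$ for tails. $\mathbb{P}_n(a\le S_n\le b)=|\{\omega\in A_n: a\le S_n(\omega)\le b\}|/|A_n|$ (note $A_n\neq\emptyset$ since the all-heads sequence lies in $A_n$). *)

theory Defs
  imports "HOL-Analysis.Analysis"
begin

definition G :: "real \<Rightarrow> real \<Rightarrow> real \<Rightarrow> real" where
  "G t x y = 1 / sqrt (2 * pi * t) * exp (- ((y - x)^2) / (2 * t))"

definition H :: "real \<Rightarrow> real \<Rightarrow> real \<Rightarrow> real" where
  "H t x y = G t x y - G t x (- y)"

definition coin_seqs :: "nat \<Rightarrow> int list set" where
  "coin_seqs n = {\<omega>. length \<omega> = n \<and> set \<omega> \<subseteq> {-1, 1}}"

text \<open>S_k(omega) = x + sqrt t / sqrt n * sum_{i=1}^k omega_i (list index i-1).\<close>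
definition walk :: "real \<Rightarrow> real \<Rightarrow> nat \<Rightarrow> int list \<Rightarrow> nat \<Rightarrow> real" where
  "walk x t n \<omega> k = x + sqrt t / sqrt (real n) * (\<Sum>i<k. real_of_int (\<omega> ! i))"

definition A_set :: "real \<Rightarrow> real \<Rightarrow> nat \<Rightarrow> int list set" where
  "A_set x t n = {\<omega> \<in> coin_seqs n. \<forall>k\<in>{1..n}. walk x t n \<omega> k > 0}"

definition Pn :: "real \<Rightarrow> real \<Rightarrow> nat \<Rightarrow> ereal \<Rightarrow> ereal \<Rightarrow> real" where
  "Pn x t n a b =
     real (card {\<omega> \<in> A_set x t n. a \<le> ereal (walk x t n \<omega> n) \<and> ereal (walk x t n \<omega> n) \<le> b})
     / real (card (A_set x t n))"

end

theory Submission
  imports Defs "HOL-Probability.Probability" "HOL-Real_Asymp.Real_Asymp"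
begin

text \<open>
  With \<open>L = \<lceil>x \<surd>n / \<surd>t\<rceil>\<close>, the walk stays positive iff the integer partial sums of \<open>\<omega>\<close>
  stay above \<open>-L\<close>. By the reflection principle, the number of such \<open>\<omega>\<close> with \<open>S\<^sub>n\<close> in a
  window \<open>W \<subseteq> (0,\<infinity>)\<close> is the number of all \<open>\<omega>\<close> with \<open>S\<^sub>n \<in> W\<close> minus the number of those
  whose path reflected at level \<open>-L\<close> ends in \<open>W\<close>. Divided by \<open>2\<^sup>n\<close>, these are the masses of two
  affine preimages of \<open>W\<close> under the law of \<open>(\<omega>\<^sub>1 + \<dots> + \<omega>\<^sub>n)/\<surd>n\<close>, shifted by a lattice
  correction of order \<open>1/\<surd>n\<close>. By the central limit theorem they converge to
  \<open>\<integral>\<^sub>W G(t,x,y) dy\<close> and \<open>\<integral>\<^sub>W G(t,x,-y) dy\<close>, so the rescaled counts converge to \<open>\<integral>\<^sub>W H\<close>.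
  The theorem is the quotient of the cases \<open>W = [a,b]\<close> and \<open>W = (0,\<infinity>)\<close>; the latter limit is
  positive because \<open>H(t,x,y) > 0\<close> for \<open>y > 0\<close>.
\<close>

lemma finite_coin_seqs: "finite (coin_seqs n)"
proof -
  have "coin_seqs n = {xs. set xs \<subseteq> {-1, 1} \<and> length xs = n}"
    by (auto simp: coin_seqs_def)
  then show ?thesis
    using finite_lists_length_eq[of "{-1, 1::int}" n] by simp
qed

lemma coin_seqs_0: "coin_seqs 0 = {[]}"
  by (auto simp: coin_seqs_def)

lemma coin_seqs_Suc: "coin_seqs (Suc n) = Cons 1 ` coin_seqs n \<union> Cons (-1) ` coin_seqs n"
proof (rule set_eqI)
  fix w
  show "w \<in> coin_seqs (Suc n) \<longleftrightarrow> w \<in> Cons 1 ` coin_seqs n \<union> Cons (-1) ` coin_seqs n"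
    by (cases w) (auto simp: coin_seqs_def)
qed

lemma sum_coin_seqs_Suc:
  "sum f (coin_seqs (Suc n)) = (\<Sum>w\<in>coin_seqs n. f (1 # w)) + (\<Sum>w\<in>coin_seqs n. f (-1 # w))"
  unfolding coin_seqs_Suc
  by (subst sum.union_disjoint) (auto simp: finite_coin_seqs sum.reindex)

lemma card_coin_seqs_Suc_filter:
  "card {w \<in> coin_seqs (Suc n). P w} =
     card {w \<in> coin_seqs n. P (1 # w)} + card {w \<in> coin_seqs n. P (-1 # w)}"
proof -
  have split: "{w \<in> coin_seqs (Suc n). P w} =
      Cons 1 ` {w \<in> coin_seqs n. P (1 # w)} \<union> Cons (-1) ` {w \<in> coin_seqs n. P (-1 # w)}"
    unfolding coin_seqs_Suc by auto
  show ?thesis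
    unfolding split by (subst card_Un_disjoint) (auto simp: finite_coin_seqs card_image)
qed

lemma sum_coin_seqs_prod_list:
  fixes g :: "int \<Rightarrow> 'a::comm_ring_1"
  shows "(\<Sum>w\<in>coin_seqs n. prod_list (map g w)) = (g 1 + g (-1)) ^ n"
  by (induction n) (simp_all add: coin_seqs_0 sum_coin_seqs_Suc sum_distrib_left[symmetric] algebra_simps)

lemma card_coin_seqs: "card (coin_seqs n) = 2 ^ n"
  using card_coin_seqs_Suc_filter[where P = "\<lambda>_. True"]
  by (induction n) (simp_all add: coin_seqs_0)

lemma coin_seqs_nonempty: "coin_seqs n \<noteq> {}"
  using card_coin_seqs[of n] by auto

lemma card_coin_seqs_sum_list_uminus:
  "card {w \<in> coin_seqs n. P (sum_list w)} = card {w \<in> coin_seqs n. P (- sum_list w)}"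
proof (rule bij_betw_same_card[of "map uminus"], rule bij_betw_byWitness[of _ "map uminus"])
  have neg: "sum_list (map uminus w) = - sum_list w" for w :: "int list"
    by (induction w) auto
  show "map uminus ` {w \<in> coin_seqs n. P (sum_list w)} \<subseteq> {w \<in> coin_seqs n. P (- sum_list w)}"
    by (force simp: neg coin_seqs_def)
  show "map uminus ` {w \<in> coin_seqs n. P (- sum_list w)} \<subseteq> {w \<in> coin_seqs n. P (sum_list w)}"
    by (force simp: neg coin_seqs_def)
qed auto

section \<open>The reflection principle\<close>

fun stays_above :: "int \<Rightarrow> int \<Rightarrow> int list \<Rightarrow> bool" where
  "stays_above m p [] = True"
| "stays_above m p (e # w) = (m < p + e \<and> stays_above m (p + e) w)"

lemma stays_above_iff_take:
  "stays_above m p w \<longleftrightarrow> (\<forall>k<length w. m < p + sum_list (take (Suc k) w))"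
  by (induction w arbitrary: p) (auto simp: less_Suc_eq_0_disj add.assoc)

text \<open>
  The second summand counts, via reflection, the paths ending in \<open>Q\<close> that touch \<open>m\<close>. Instead of
  building the reflection bijection, the proof splits off the first step; when it lands on \<open>m\<close>,
  the symmetry \<open>\<omega> \<mapsto> -\<omega>\<close> of the remaining steps identifies the two counts that are left.
\<close>
lemma reflection_principle:
  assumes Q: "\<And>j. Q j \<Longrightarrow> m < j" and "m < p"
  shows "card {w \<in> coin_seqs n. stays_above m p w \<and> Q (p + sum_list w)}
       + card {w \<in> coin_seqs n. Q (2 * m - (p + sum_list w))}
       = card {w \<in> coin_seqs n. Q (p + sum_list w)}"
  using \<open>m < p\<close>
proof (induction n arbitrary: p)
  case 0
  then show ?case using Q[of "2 * m - p"] by (auto simp: coin_seqs_0 Collect_conv_if)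
next
  case (Suc n)
  have up: "card {w \<in> coin_seqs n. stays_above m (p + 1) w \<and> Q (p + 1 + sum_list w)}
       + card {w \<in> coin_seqs n. Q (2 * m - (p + 1 + sum_list w))}
       = card {w \<in> coin_seqs n. Q (p + 1 + sum_list w)}"
    using Suc by simp
  have down: "card {w \<in> coin_seqs n. m < p - 1 \<and> stays_above m (p - 1) w \<and> Q (p - 1 + sum_list w)}
       + card {w \<in> coin_seqs n. Q (2 * m - (p - 1 + sum_list w))}
       = card {w \<in> coin_seqs n. Q (p - 1 + sum_list w)}"
  proof (cases "m < p - 1")
    case True
    then show ?thesis using Suc.IH[of "p - 1"] by simp
  next
    case False
    then have "p - 1 = m" using Suc.prems by simp
    then show ?thesis
      using card_coin_seqs_sum_list_uminus[of n "\<lambda>s. Q (m - s)"] by (simp add: algebra_simps)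
  qed
  show ?case
    using up down Suc.prems by (simp add: card_coin_seqs_Suc_filter algebra_simps)
qed

section \<open>The normalised sum and the central limit theorem\<close>

definition scaled_sum_distr :: "nat \<Rightarrow> real \<Rightarrow> real measure" where
  "scaled_sum_distr n e = distr (measure_pmf (pmf_of_set (coin_seqs n))) borel
      (\<lambda>w. real_of_int (sum_list w) / sqrt (real n) + e)"

lemma real_distribution_scaled_sum_distr: "real_distribution (scaled_sum_distr n e)"
  unfolding scaled_sum_distr_def
  by (rule prob_space.real_distribution_distr) (auto simp: prob_space_measure_pmf)

lemma measure_scaled_sum_distr:
  assumes "A \<in> sets borel"
  shows "measure (scaled_sum_distr n e) A =
    real (card {w \<in> coin_seqs n. real_of_int (sum_list w) / sqrt (real n) + e \<in> A}) / 2 ^ n"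
proof -
  let ?X = "\<lambda>w. real_of_int (sum_list w) / sqrt (real n) + e"
  have "measure (scaled_sum_distr n e) A = measure (measure_pmf (pmf_of_set (coin_seqs n))) (?X -` A)"
    unfolding scaled_sum_distr_def using assms by (subst measure_distr) auto
  also have "\<dots> = real (card (coin_seqs n \<inter> ?X -` A)) / real (card (coin_seqs n))"
    by (rule measure_pmf_of_set[OF coin_seqs_nonempty finite_coin_seqs])
  also have "coin_seqs n \<inter> ?X -` A = {w \<in> coin_seqs n. ?X w \<in> A}"
    by auto
  finally show ?thesis by (simp add: card_coin_seqs)
qed

lemma exp_mult_sum_list:
  fixes c :: "'a::{real_normed_field, banach}"
  shows "exp (c * of_int (sum_list w)) = prod_list (map (\<lambda>y. exp (c * of_int y)) w)"
  by (induction w) (auto simp: distrib_left exp_add)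

lemma char_scaled_sum_distr:
  "char (scaled_sum_distr n e) u = iexp (u * e) * complex_of_real (cos (u / sqrt (real n)) ^ n)"
proof -
  let ?X = "\<lambda>w. real_of_int (sum_list w) / sqrt (real n) + e"
  let ?c = "\<i> * complex_of_real (u / sqrt (real n))"
  have "char (scaled_sum_distr n e) u = (CLINT w | measure_pmf (pmf_of_set (coin_seqs n)). iexp (u * ?X w))"
    unfolding char_def scaled_sum_distr_def by (subst integral_distr) auto
  also have "\<dots> = (\<Sum>w\<in>coin_seqs n. iexp (u * ?X w)) / of_nat (card (coin_seqs n))"
    by (subst integral_measure_pmf[of "coin_seqs n"])
       (auto simp: finite_coin_seqs coin_seqs_nonempty sum_divide_distrib scaleR_conv_of_real)
  also have "(\<Sum>w\<in>coin_seqs n. iexp (u * ?X w)) =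
      iexp (u * e) * (\<Sum>w\<in>coin_seqs n. prod_list (map (\<lambda>y. exp (?c * of_int y)) w))"
  proof -
    have "iexp (u * ?X w) = iexp (u * e) * exp (?c * of_int (sum_list w))" for w
      by (simp add: distrib_left exp_add[symmetric] algebra_simps)
    then show ?thesis
      by (simp only: exp_mult_sum_list sum_distrib_left)
  qed
  also have "(\<Sum>w\<in>coin_seqs n. prod_list (map (\<lambda>y. exp (?c * of_int y)) w)) = (exp ?c + exp (- ?c)) ^ n"
    by (subst sum_coin_seqs_prod_list) simp
  also have "exp ?c + exp (- ?c) = 2 * complex_of_real (cos (u / sqrt (real n)))"
    by (simp add: cos_exp_eq cos_of_real[symmetric] del: cos_of_real)
  finally show ?thesis by (simp add: card_coin_seqs power_mult_distrib)
qed

lemma weak_conv_scaled_sum_distr: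
  assumes "e \<longlonglongrightarrow> 0"
  shows "weak_conv_m (\<lambda>n. scaled_sum_distr n (e n)) std_normal_distribution"
proof (rule levy_continuity[OF real_distribution_scaled_sum_distr real_dist_normal_dist])
  fix u
  have "(\<lambda>n. cos (u / sqrt (real n)) ^ n) \<longlonglongrightarrow> exp (- (u * u) / 2)"
    by real_asymp
  then have "(\<lambda>n. iexp (u * e n) * complex_of_real (cos (u / sqrt (real n)) ^ n))
      \<longlonglongrightarrow> iexp (u * 0) * complex_of_real (exp (- (u * u) / 2))"
    by (intro tendsto_intros assms)
  then show "(\<lambda>n. char (scaled_sum_distr n (e n)) u) \<longlonglongrightarrow> char std_normal_distribution u"
    by (simp add: char_scaled_sum_distr char_std_normal_distribution power2_eq_square)
qed

definition pos_window :: "ereal \<Rightarrow> ereal \<Rightarrow> real set" where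
  "pos_window a b = {y. a \<le> ereal y \<and> ereal y \<le> b \<and> 0 < y}"

lemma pos_window_borel [measurable]: "pos_window a b \<in> sets borel"
  unfolding pos_window_def by measurable

lemma emeasure_density_lborel_finite:
  assumes "f \<in> borel_measurable borel" and "finite F"
  shows "emeasure (density lborel f) F = 0"
proof -
  have "F \<in> null_sets lborel"
    using assms by (intro countable_imp_null_set_lborel countable_finite)
  moreover from this have "AE y in lborel. y \<notin> F"
    by (rule AE_not_in)
  ultimately have "F \<in> null_sets (density lborel f)"
    using assms by (subst null_sets_density_iff) (auto elim: AE_mp)
  then show ?thesis by auto
qed

lemma frontier_subset_closed_diff_open:
  assumes "Op \<subseteq> A" "A \<subseteq> Cl" "open Op" "closed Cl"
  shows "frontier A \<subseteq> Cl - Op"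
proof -
  have "closure A \<subseteq> Cl" using assms by (intro closure_minimal)
  moreover have "Op \<subseteq> interior A" using assms by (intro interior_maximal)
  ultimately show ?thesis unfolding frontier_def by auto
qed

lemma emeasure_std_normal_frontier_pos_window:
  assumes "v \<noteq> 0"
  shows "emeasure std_normal_distribution (frontier {z. u + v * z \<in> pos_window a b}) = 0"
proof -
  let ?g = "\<lambda>z. u + v * z"
  define Op where "Op = {z. a < ereal (?g z) \<and> ereal (?g z) < b \<and> 0 < ?g z}"
  define Cl where "Cl = {z. a \<le> ereal (?g z) \<and> ereal (?g z) \<le> b \<and> 0 \<le> ?g z}"
  define F where "F = {(real_of_ereal a - u) / v, (real_of_ereal b - u) / v, - u / v}"
  have "open Op"
    unfolding Op_def by (intro open_Collect_conj open_Collect_less continuous_intros)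
  moreover have "closed Cl"
    unfolding Cl_def by (intro closed_Collect_conj closed_Collect_le continuous_intros)
  ultimately have "frontier {z. ?g z \<in> pos_window a b} \<subseteq> Cl - Op"
    by (intro frontier_subset_closed_diff_open) (auto simp: Op_def Cl_def pos_window_def)
  also have "Cl - Op \<subseteq> F"
  proof
    fix z assume "z \<in> Cl - Op"
    then have "ereal (?g z) = a \<or> ereal (?g z) = b \<or> ?g z = 0"
      unfolding Cl_def Op_def by auto
    then have "?g z = real_of_ereal a \<or> ?g z = real_of_ereal b \<or> ?g z = 0"
      by force
    then show "z \<in> F"
      unfolding F_def using assms by (auto simp: field_simps)
  qed
  moreover have "F \<in> sets std_normal_distribution"
    by (simp add: F_def finite_imp_closed borel_closed)
  ultimately have "emeasure std_normal_distribution (frontier {z. ?g z \<in> pos_window a b})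
      \<le> emeasure std_normal_distribution F"
    by (intro emeasure_mono) auto
  also have "\<dots> = 0"
    by (rule emeasure_density_lborel_finite) (simp_all add: F_def)
  finally show ?thesis by simp
qed

lemma measure_density_lborel_eq_set_integral:
  assumes "integrable lborel g" "\<And>y. 0 \<le> g y" and "J \<in> sets borel"
  shows "measure (density lborel (\<lambda>y. ennreal (g y))) J = (LINT y:J|lborel. g y)"
proof -
  have [measurable]: "g \<in> borel_measurable borel"
    using assms(1) by auto
  have int: "integrable lborel (\<lambda>y. g y * indicator J y)"
    using integrable_mult_indicator[of J lborel g] assms by (simp add: mult.commute)
  have "emeasure (density lborel (\<lambda>y. ennreal (g y))) J = (\<integral>\<^sup>+ y. ennreal (g y * indicator J y) \<partial>lborel)"
    using assms(3) by (subst emeasure_density) (auto intro!: nn_integral_cong split: split_indicator)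
  also have "\<dots> = ennreal (\<integral> y. g y * indicator J y \<partial>lborel)"
    using int assms(2) by (intro nn_integral_eq_integral) auto
  finally show ?thesis
    unfolding measure_def using assms(2)
    by (simp add: integral_nonneg_AE set_lebesgue_integral_def mult.commute)
qed

lemma measure_std_normal_affine_preimage:
  assumes "v \<noteq> 0" and "J \<in> sets borel"
  shows "measure std_normal_distribution {z. u + v * z \<in> J} = (LINT y:J|lborel. normal_density u \<bar>v\<bar> y)"
proof -
  interpret prob_space std_normal_distribution
    using real_dist_normal_dist real_distribution.axioms(1) by blast
  have "distributed std_normal_distribution lborel (\<lambda>z. z) std_normal_density"
    unfolding distributed_def by (auto simp: distr_id2)
  then have "distributed std_normal_distribution lborel (\<lambda>z. u + v * z) (normal_density (u + v * 0) (\<bar>v\<bar> * 1))"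
    by (rule normal_density_affine) (use assms in auto)
  then have affine: "distr std_normal_distribution lborel (\<lambda>z. u + v * z) = density lborel (normal_density u \<bar>v\<bar>)"
    unfolding distributed_def by simp
  have "measure std_normal_distribution {z. u + v * z \<in> J} =
      measure (distr std_normal_distribution lborel (\<lambda>z. u + v * z)) J"
    using assms by (subst measure_distr) (auto simp: vimage_def Collect_conj_eq)
  also have "\<dots> = (LINT y:J|lborel. normal_density u \<bar>v\<bar> y)"
    unfolding affine using assms by (intro measure_density_lborel_eq_set_integral) auto
  finally show ?thesis .
qed

lemma set_integral_pos_window_eq_interval_integral:
  fixes f :: "real \<Rightarrow> real"
  assumes [measurable]: "f \<in> borel_measurable borel" and "0 \<le> a" "a < b"
  shows "(LINT y:pos_window a b|lborel. f y) = (LBINT y=a..b. f y)"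
proof -
  have "AE y in lborel. y \<noteq> real_of_ereal a \<and> y \<noteq> real_of_ereal b \<and> y \<noteq> 0"
    using AE_lborel_singleton[of "real_of_ereal a"] AE_lborel_singleton[of "real_of_ereal b"]
      AE_lborel_singleton[of 0]
    by eventually_elim auto
  then have "AE y in lborel. y \<in> pos_window a b \<longleftrightarrow> y \<in> einterval a b"
  proof (rule AE_mp, intro AE_I2 impI)
    fix y :: real
    assume "y \<noteq> real_of_ereal a \<and> y \<noteq> real_of_ereal b \<and> y \<noteq> 0"
    then have "ereal y \<noteq> a" "ereal y \<noteq> b" "y \<noteq> 0" by auto
    moreover have "a < ereal y \<Longrightarrow> 0 < y"
      using \<open>0 \<le> a\<close> by (metis ereal_less(2) le_less_trans)
    ultimately show "y \<in> pos_window a b \<longleftrightarrow> y \<in> einterval a b"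
      by (auto simp: pos_window_def einterval_def)
  qed
  then have "(LINT y:pos_window a b|lborel. f y) = (LINT y:einterval a b|lborel. f y)"
    by (intro set_integral_cong_set) (auto simp: set_borel_measurable_def)
  then show ?thesis
    using \<open>a < b\<close> by (simp add: interval_lebesgue_integral_def less_imp_le)
qed

lemma scaled_sum_distr_window_tendsto:
  assumes "e \<longlonglongrightarrow> 0" "v \<noteq> 0"
  shows "(\<lambda>n. measure (scaled_sum_distr n (e n)) {z. u + v * z \<in> pos_window a b})
      \<longlonglongrightarrow> (LINT y:pos_window a b|lborel. normal_density u \<bar>v\<bar> y)"
  unfolding measure_std_normal_affine_preimage[OF \<open>v \<noteq> 0\<close> pos_window_borel, symmetric]
  using assms
  by (intro weak_conv_imp_continuity_set_conv real_distribution_scaled_sum_distr real_dist_normal_dist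
      weak_conv_scaled_sum_distr emeasure_std_normal_frontier_pos_window) auto

section \<open>The Dirichlet heat kernel\<close>

lemma G_eq_normal_density: "t > 0 \<Longrightarrow> G t x y = normal_density x (sqrt t) y"
  unfolding G_def normal_density_def by simp

lemma G_uminus_eq_normal_density: "t > 0 \<Longrightarrow> G t x (- y) = normal_density (- x) (sqrt t) y"
  unfolding G_def normal_density_def by (simp add: power2_eq_square algebra_simps)

lemma H_eq_normal_density_diff:
  assumes "t > 0"
  shows "H t x y = normal_density x (sqrt t) y - normal_density (- x) (sqrt t) y"
  unfolding H_def G_uminus_eq_normal_density[OF assms] unfolding G_eq_normal_density[OF assms] ..

lemma H_pos:
  assumes "x > 0" "t > 0" "y > 0"
  shows "H t x y > 0"
proof -
  have "(y - x)\<^sup>2 < (- y - x)\<^sup>2"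
    using assms by (simp add: power2_eq_square algebra_simps)
  then have "exp (- ((- y - x)\<^sup>2) / (2 * t)) < exp (- ((y - x)\<^sup>2) / (2 * t))"
    using assms by (simp add: divide_strict_right_mono)
  then have "1 / sqrt (2 * pi * t) * exp (- ((- y - x)\<^sup>2) / (2 * t))
      < 1 / sqrt (2 * pi * t) * exp (- ((y - x)\<^sup>2) / (2 * t))"
    using assms by (intro mult_strict_left_mono) auto
  then show ?thesis
    unfolding H_def G_def by linarith
qed

lemma set_integrable_normal_density:
  assumes "0 < \<sigma>" "J \<in> sets borel"
  shows "set_integrable lborel J (normal_density \<mu> \<sigma>)"
  unfolding set_integrable_def using assms by (intro integrable_mult_indicator) auto

lemma borel_measurable_H:
  assumes "t > 0"
  shows "H t x \<in> borel_measurable borel"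
  unfolding H_eq_normal_density_diff[OF assms, abs_def] by measurable

lemma set_integrable_H:
  assumes "t > 0" "J \<in> sets borel"
  shows "set_integrable lborel J (H t x)"
  unfolding H_eq_normal_density_diff[OF \<open>t > 0\<close>]
  using assms by (intro set_integral_diff(1) set_integrable_normal_density) auto

lemma set_integral_H_eq_diff:
  assumes "t > 0" "J \<in> sets borel"
  shows "(LINT y:J|lborel. H t x y) =
    (LINT y:J|lborel. normal_density x (sqrt t) y) - (LINT y:J|lborel. normal_density (- x) (sqrt t) y)"
  unfolding H_eq_normal_density_diff[OF \<open>t > 0\<close>]
  using assms by (intro set_integral_diff(2) set_integrable_normal_density) auto

lemma interval_integral_H_pos:
  assumes "x > 0" "t > 0"
  shows "(LBINT y=0..\<infinity>. H t x y) > 0"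
proof -
  have "(LBINT y=0..\<infinity>. H t x y) = integral\<^sup>L lborel (\<lambda>y. indicator {0<..} y * H t x y)"
    by (simp add: interval_lebesgue_integral_def set_lebesgue_integral_def zero_ereal_def)
  moreover have int: "integrable lborel (\<lambda>y. indicator {0<..} y * H t x y)"
    using set_integrable_H[OF \<open>t > 0\<close>, of "{0<..}"] by (simp add: set_integrable_def)
  moreover have nonneg: "AE y in lborel. 0 \<le> indicator {0<..} y * H t x y"
    by (intro AE_I2) (auto split: split_indicator intro: less_imp_le H_pos[OF assms])
  moreover have "\<not> (AE y in lborel. indicator {0<..} y * H t x y = 0)"
  proof
    assume "AE y in lborel. indicator {0<..} y * H t x y = 0"
    then have "AE y in lborel. y \<notin> {0<..<1::real}"
      by (rule AE_mp) (auto intro!: AE_I2 split: split_indicator dest: H_pos[OF assms])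
    then have "emeasure lborel {0<..<1::real} = 0"
      by (subst (asm) AE_iff_measurable[of "{0<..<1}"]) auto
    then show False by simp
  qed
  ultimately show ?thesis
    using integral_nonneg_AE[OF nonneg] integral_nonneg_eq_0_iff_AE[OF int nonneg] by linarith
qed

section \<open>From the conditioned walk to the Dirichlet heat kernel\<close>

definition barrier :: "real \<Rightarrow> real \<Rightarrow> nat \<Rightarrow> int" where
  "barrier x t n = \<lceil>x * sqrt (real n) / sqrt t\<rceil>"

text \<open>
  Chosen so that the reflected endpoint \<open>-2 L - s\<close> of a path with \<open>\<Sum>\<omega>\<^sub>i = s\<close> corresponds to
  the value \<open>-x - \<surd>t (s/\<surd>n + reflection_shift x t n)\<close>.
\<close>
definition reflection_shift :: "real \<Rightarrow> real \<Rightarrow> nat \<Rightarrow> real" where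
  "reflection_shift x t n = 2 * (sqrt t / sqrt (real n) * of_int (barrier x t n) - x) / sqrt t"

definition surviving_mass :: "real \<Rightarrow> real \<Rightarrow> nat \<Rightarrow> ereal \<Rightarrow> ereal \<Rightarrow> real" where
  "surviving_mass x t n a b =
     real (card {\<omega> \<in> A_set x t n. a \<le> ereal (walk x t n \<omega> n) \<and> ereal (walk x t n \<omega> n) \<le> b}) / 2 ^ n"

lemma walk_eq_sum_list_take:
  "k \<le> length w \<Longrightarrow> walk x t n w k = x + sqrt t / sqrt (real n) * of_int (sum_list (take k w))"
  unfolding walk_def by (simp add: sum_list_sum_nth atLeast0LessThan min_absorb2)

context
  fixes x t :: real and n :: nat
  assumes x_pos: "x > 0" and t_pos: "t > 0" and n_pos: "n \<ge> 1"
begin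

lemma walk_pos_iff_barrier: "0 < x + sqrt t / sqrt (real n) * of_int s \<longleftrightarrow> - barrier x t n < s"
proof -
  have "0 < x + sqrt t / sqrt (real n) * of_int s \<longleftrightarrow> of_int (- s) < x * sqrt (real n) / sqrt t"
    using t_pos n_pos by (simp add: field_simps) linarith
  also have "\<dots> \<longleftrightarrow> - s < barrier x t n"
    unfolding barrier_def by (rule less_ceiling_iff[symmetric])
  finally show ?thesis by linarith
qed

lemma walk_pos_iff_barrier_take:
  "k \<le> length w \<Longrightarrow> 0 < walk x t n w k \<longleftrightarrow> - barrier x t n < sum_list (take k w)"
  unfolding walk_eq_sum_list_take by (rule walk_pos_iff_barrier)

lemma A_set_eq_stays_above: "A_set x t n = {w \<in> coin_seqs n. stays_above (- barrier x t n) 0 w}"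
proof -
  have "(\<forall>k<n. 0 < walk x t n w (Suc k)) \<longleftrightarrow> stays_above (- barrier x t n) 0 w"
    if "length w = n" for w
    using that by (simp add: stays_above_iff_take walk_pos_iff_barrier_take Suc_le_eq)
  then show ?thesis
    unfolding A_set_def image_Suc_lessThan[symmetric] by (auto simp: coin_seqs_def)
qed

lemma card_surviving_eq_diff:
  fixes W :: "real set"
  assumes "W \<subseteq> {0<..}"
  defines "v \<equiv> \<lambda>s::int. x + sqrt t / sqrt (real n) * of_int s"
  shows "real (card {\<omega> \<in> A_set x t n. walk x t n \<omega> n \<in> W}) =
    real (card {w \<in> coin_seqs n. v (sum_list w) \<in> W}) -
    real (card {w \<in> coin_seqs n. v (- 2 * barrier x t n - sum_list w) \<in> W})"
proof -
  let ?L = "barrier x t n"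
  have "0 < ?L"
    unfolding barrier_def using x_pos t_pos n_pos by simp
  have surviving: "{\<omega> \<in> A_set x t n. walk x t n \<omega> n \<in> W} =
      {w \<in> coin_seqs n. stays_above (- ?L) 0 w \<and> v (0 + sum_list w) \<in> W}"
    unfolding A_set_eq_stays_above v_def by (auto simp: coin_seqs_def walk_eq_sum_list_take)
  have "- ?L < s" if "v s \<in> W" for s
    using that assms(1) walk_pos_iff_barrier[of s] by (auto simp: v_def)
  then have "card {w \<in> coin_seqs n. stays_above (- ?L) 0 w \<and> v (0 + sum_list w) \<in> W}
      + card {w \<in> coin_seqs n. v (2 * - ?L - (0 + sum_list w)) \<in> W}
      = card {w \<in> coin_seqs n. v (0 + sum_list w) \<in> W}"
    using \<open>0 < ?L\<close> by (intro reflection_principle) auto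
  moreover have "2 * - ?L - (0 + s) = - 2 * ?L - s" for s
    by simp
  ultimately show ?thesis
    unfolding surviving by simp
qed

lemma surviving_mass_eq_measure_diff:
  "surviving_mass x t n a b =
     measure (scaled_sum_distr n 0) {z. x + sqrt t * z \<in> pos_window a b} -
     measure (scaled_sum_distr n (reflection_shift x t n)) {z. - x + - sqrt t * z \<in> pos_window a b}"
proof -
  have window: "{\<omega> \<in> A_set x t n. a \<le> ereal (walk x t n \<omega> n) \<and> ereal (walk x t n \<omega> n) \<le> b} =
      {\<omega> \<in> A_set x t n. walk x t n \<omega> n \<in> pos_window a b}"
    using n_pos by (auto simp: A_set_def pos_window_def)
  have reflected: "x + sqrt t / sqrt (real n) * of_int (- 2 * barrier x t n - s) =
      - x + - sqrt t * (real_of_int s / sqrt (real n) + reflection_shift x t n)" for s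
    using t_pos n_pos by (simp add: reflection_shift_def field_simps)
  have "pos_window a b \<subseteq> {0<..}"
    by (auto simp: pos_window_def)
  then have "surviving_mass x t n a b =
      (real (card {w \<in> coin_seqs n. x + sqrt t / sqrt (real n) * of_int (sum_list w) \<in> pos_window a b}) -
       real (card {w \<in> coin_seqs n. - x + - sqrt t * (real_of_int (sum_list w) / sqrt (real n)
          + reflection_shift x t n) \<in> pos_window a b})) / 2 ^ n"
    unfolding surviving_mass_def window by (simp only: card_surviving_eq_diff reflected)
  moreover have "{z. c + v * z \<in> pos_window a b} \<in> sets borel" for c v :: real
    by measurable
  ultimately show ?thesis
    by (simp add: measure_scaled_sum_distr diff_divide_distrib)
qed

lemma Pn_eq_surviving_mass_ratio: "Pn x t n a b = surviving_mass x t n a b / surviving_mass x t n 0 \<infinity>"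
proof -
  have "{\<omega> \<in> A_set x t n. 0 \<le> ereal (walk x t n \<omega> n) \<and> ereal (walk x t n \<omega> n) \<le> \<infinity>} = A_set x t n"
    using n_pos by (auto simp: A_set_def less_imp_le)
  then show ?thesis
    unfolding Pn_def surviving_mass_def by simp
qed

end

lemma reflection_shift_tendsto_0:
  assumes "x > 0" "t > 0"
  shows "(\<lambda>n. reflection_shift x t n) \<longlonglongrightarrow> 0"
proof (rule Lim_null_comparison)
  have "\<bar>reflection_shift x t n\<bar> \<le> 2 / sqrt (real n)" if "n \<ge> 1" for n
  proof -
    define c where "c = x * sqrt (real n) / sqrt t"
    have "c \<le> of_int (barrier x t n)" "of_int (barrier x t n) < c + 1"
      unfolding barrier_def c_def by (simp_all add: le_of_int_ceiling) linarith
    moreover have "reflection_shift x t n = 2 * (of_int (barrier x t n) - c) / sqrt (real n)"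
      unfolding reflection_shift_def c_def using assms that by (simp add: field_simps)
    ultimately show ?thesis
      using that by (simp add: divide_right_mono)
  qed
  then show "\<forall>\<^sub>F n in sequentially. norm (reflection_shift x t n) \<le> 2 / sqrt (real n)"
    by (intro eventually_sequentiallyI[of 1]) auto
  show "(\<lambda>n. 2 / sqrt (real n)) \<longlonglongrightarrow> 0"
    by real_asymp
qed

lemma surviving_mass_tendsto:
  assumes "x > 0" "t > 0"
  shows "(\<lambda>n. surviving_mass x t n a b) \<longlonglongrightarrow> (LINT y:pos_window a b|lborel. H t x y)"
proof -
  have "(\<lambda>n. measure (scaled_sum_distr n 0) {z. x + sqrt t * z \<in> pos_window a b})
      \<longlonglongrightarrow> (LINT y:pos_window a b|lborel. normal_density x (sqrt t) y)"
    using scaled_sum_distr_window_tendsto[of "\<lambda>_. 0" "sqrt t" x a b] assms by simp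
  moreover have "(\<lambda>n. measure (scaled_sum_distr n (reflection_shift x t n)) {z. - x + - sqrt t * z \<in> pos_window a b})
      \<longlonglongrightarrow> (LINT y:pos_window a b|lborel. normal_density (- x) (sqrt t) y)"
    using scaled_sum_distr_window_tendsto[OF reflection_shift_tendsto_0[OF assms], of "- sqrt t" "- x" a b]
      assms by simp
  ultimately have "(\<lambda>n. measure (scaled_sum_distr n 0) {z. x + sqrt t * z \<in> pos_window a b} -
      measure (scaled_sum_distr n (reflection_shift x t n)) {z. - x + - sqrt t * z \<in> pos_window a b})
      \<longlonglongrightarrow> (LINT y:pos_window a b|lborel. normal_density x (sqrt t) y) -
        (LINT y:pos_window a b|lborel. normal_density (- x) (sqrt t) y)"
    by (rule tendsto_diff)
  moreover have "\<forall>\<^sub>F n in sequentially. measure (scaled_sum_distr n 0) {z. x + sqrt t * z \<in> pos_window a b} -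
      measure (scaled_sum_distr n (reflection_shift x t n)) {z. - x + - sqrt t * z \<in> pos_window a b}
      = surviving_mass x t n a b"
    using assms by (intro eventually_sequentiallyI[of 1]) (simp add: surviving_mass_eq_measure_diff)
  ultimately show ?thesis
    using assms by (simp add: set_integral_H_eq_diff Lim_transform_eventually)
qed

theorem mainTheorem1:
  fixes x t :: real and a b :: ereal
  assumes "x > 0" and "t > 0" and "0 \<le> a" and "a < b"
  shows "(\<lambda>n. Pn x t n a b) \<longlonglongrightarrow>
           (LBINT y=a..b. H t x y) / (LBINT y=0..\<infinity>. H t x y)"
proof -
  have H_measurable: "H t x \<in> borel_measurable borel"
    using \<open>t > 0\<close> by (rule borel_measurable_H)
  have "(\<lambda>n. surviving_mass x t n a b) \<longlonglongrightarrow> (LBINT y=a..b. H t x y)"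
    using surviving_mass_tendsto[OF assms(1,2), of a b]
      set_integral_pos_window_eq_interval_integral[OF H_measurable assms(3,4)] by simp
  moreover have "(\<lambda>n. surviving_mass x t n 0 \<infinity>) \<longlonglongrightarrow> (LBINT y=0..\<infinity>. H t x y)"
    using surviving_mass_tendsto[OF assms(1,2), of 0 \<infinity>]
      set_integral_pos_window_eq_interval_integral[OF H_measurable, of 0 \<infinity>] by simp
  moreover have "(LBINT y=0..\<infinity>. H t x y) \<noteq> 0"
    using interval_integral_H_pos[OF assms(1,2)] by simp
  ultimately have "(\<lambda>n. surviving_mass x t n a b / surviving_mass x t n 0 \<infinity>) \<longlonglongrightarrow>
      (LBINT y=a..b. H t x y) / (LBINT y=0..\<infinity>. H t x y)"
    by (rule tendsto_divide)
  moreover have "\<forall>\<^sub>F n in sequentially. surviving_mass x t n a b / surviving_mass x t n 0 \<infinity> = Pn x t n a b"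
    using assms by (intro eventually_sequentiallyI[of 1]) (simp add: Pn_eq_surviving_mass_ratio)
  ultimately show ?thesis
    by (rule Lim_transform_eventually)
qed

end
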